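(* Let $[X,d,m]$ be a metric random walk space with a finite invariant measure $\nu$, and assume its Ollivier-Ricci curvature satisfies $\kappa_m>0$. Then $[X,d,m]$ with $\nu$ is $m$-connected and weakly strong $m$-connected.
   Context: A metric random walk space $[X,d,m]$ is a Polish metric space $(X,d)$ with a family $m=(m_x)_{x\in X}$ of Borel probability measures, $x\mapsto m_x(A)$ Borel measurable, each with finite first moment. A Radon measure $\nu$ is invariant if $\nu(A)=\int_X m_x(A)d\nu(x)$ for all $\nu$-measurable $A$. Iterates $m_x^{*1}=m_x$, $m_x^{*n}(A)=\int_X m_z(A)dm_x^{*(n-1)}(z)$; $N^m_D=\{x:m_x^{*n}(D)=0\ \forall n\in\mathbb N\}$. The space is $m$-connected if $\nu(N^m_D)=0$ for every $\nu$-measurable $D$ with $0<\nu(D)<\infty$. It is weakly strong $m$-connected if for every $0\le u_0\in L^2(X,\nu)\cap C(X)$ not $\nu$-a.e. zero, $e^{t\Delta_m}u_0(x)>0$ for all $x\in X$ and all $t>0$, where $e^{t\Delta_m}u_0(x)$ is understood pointwise as $e^{-t}\sum_{n\ge0}\frac{t^n}{n!}\int_X u_0\,dm_x^{*n}$ (with $m_x^{*0}=\delta_x$), $\Delta_m f(x)=\int_X(f(y)-f(x))dm_x(y)$. The $1$-Wasserstein distance between probability measures is $W_1^d(\mu,\mu')=\inf_{\gamma}\int_{X\times X} d(x,y)\,d\gamma(x,y)$ over couplings $\gamma$ of $\mu,\mu'$. The Ollivier-Ricci curvature is $\kappa_m=\inf_{x\ne y}\big(1-\frac{W_1^d(m_x,m_y)}{d(x,y)}\big)$.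 *)

theory Defs
  imports "HOL-Probability.Probability"
begin

definition metric_random_walk_space :: "('a::polish_space \<Rightarrow> 'a measure) \<Rightarrow> bool" where
  "metric_random_walk_space m \<longleftrightarrow>
     (\<forall>x. prob_space (m x) \<and> sets (m x) = sets borel) \<and>
     (\<forall>A\<in>sets borel. (\<lambda>x. emeasure (m x) A) \<in> borel_measurable borel) \<and>
     (\<forall>x. (\<integral>\<^sup>+ y. ennreal (dist x y) \<partial>m x) < \<infinity>)"

text \<open>Invariant (Borel, hence Radon when finite on a Polish space) measure.\<close>
definition invariant_measure :: "('a::polish_space \<Rightarrow> 'a measure) \<Rightarrow> 'a measure \<Rightarrow> bool" where
  "invariant_measure m \<nu> \<longleftrightarrow>
     sets \<nu> = sets borel \<and>
     (\<forall>A\<in>sets borel. emeasure \<nu> A = (\<integral>\<^sup>+ x. emeasure (m x) A \<partial>\<nu>))"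

primrec m_iter :: "('a::polish_space \<Rightarrow> 'a measure) \<Rightarrow> 'a \<Rightarrow> nat \<Rightarrow> 'a measure" where
  "m_iter m x 0 = return borel x"
| "m_iter m x (Suc n) = bind (m_iter m x n) m"

definition N_set :: "('a::polish_space \<Rightarrow> 'a measure) \<Rightarrow> 'a set \<Rightarrow> 'a set" where
  "N_set m D = {x. \<forall>n\<ge>1. emeasure (m_iter m x n) D = 0}"

definition m_connected :: "('a::polish_space \<Rightarrow> 'a measure) \<Rightarrow> 'a measure \<Rightarrow> bool" where
  "m_connected m \<nu> \<longleftrightarrow>
     (\<forall>D\<in>sets borel. 0 < emeasure \<nu> D \<and> emeasure \<nu> D < \<infinity> \<longrightarrow> emeasure \<nu> (N_set m D) = 0)"

text \<open>Pointwise heat semigroup e^{t Delta_m} u (x) for nonnegative u, with values in [0,\<infinity>].\<close>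
definition heat_pt :: "('a::polish_space \<Rightarrow> 'a measure) \<Rightarrow> ('a \<Rightarrow> real) \<Rightarrow> real \<Rightarrow> 'a \<Rightarrow> ennreal" where
  "heat_pt m u t x =
     ennreal (exp (- t)) * (\<Sum>n. ennreal (t ^ n / fact n) * (\<integral>\<^sup>+ y. ennreal (u y) \<partial>m_iter m x n))"

definition weakly_strong_m_connected :: "('a::polish_space \<Rightarrow> 'a measure) \<Rightarrow> 'a measure \<Rightarrow> bool" where
  "weakly_strong_m_connected m \<nu> \<longleftrightarrow>
     (\<forall>u. continuous_on UNIV u \<and> (\<forall>x. 0 \<le> u x) \<and> integrable \<nu> (\<lambda>x. (u x)\<^sup>2) \<and>
          \<not> (AE x in \<nu>. u x = 0)
          \<longrightarrow> (\<forall>x. \<forall>t>0. 0 < heat_pt m u t x))"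

definition couplings :: "'a::polish_space measure \<Rightarrow> 'a measure \<Rightarrow> ('a \<times> 'a) measure set" where
  "couplings \<mu> \<mu>' = {\<gamma>. sets \<gamma> = sets (borel \<Otimes>\<^sub>M borel) \<and>
                        distr \<gamma> borel fst = \<mu> \<and> distr \<gamma> borel snd = \<mu>'}"

definition W1 :: "'a::polish_space measure \<Rightarrow> 'a measure \<Rightarrow> ennreal" where
  "W1 \<mu> \<mu>' = (INF \<gamma>\<in>couplings \<mu> \<mu>'. \<integral>\<^sup>+ p. ennreal (dist (fst p) (snd p)) \<partial>\<gamma>)"

definition ollivier_ricci :: "('a::polish_space \<Rightarrow> 'a measure) \<Rightarrow> ereal" where
  "ollivier_ricci m = (INF p\<in>{p::'a\<times>'a. fst p \<noteq> snd p}.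
       1 - enn2ereal (W1 (m (fst p)) (m (snd p))) / ereal (dist (fst p) (snd p)))"

end

(*
  Write P f x for the integral of f against m x.  Since W1(m x, m y) <= (1 - kappa) d(x, y),
  integrating a C-Lipschitz f along near-optimal couplings shows that P f is
  (1 - kappa) C-Lipschitz; hence for bounded Lipschitz f the iterates P^n f flatten out
  to a constant.  A finite invariant measure nu preserves the integral of P^n f, which
  identifies the constant:  nu(X) * (integral of f against m_x^{*n}) tends to the
  integral of f against nu, for every starting point x.

  Weak strong connectedness: apply this to a bounded Lipschitz g with the same zero set
  as u.  The integral of g against nu is positive, so some m_x^{*n} charges {u > 0} and
  the corresponding term of the heat series is positive.

  m-connectedness: N = N^m_D is absorbing, so nu restricted to N is again a finite
  invariant measure.  Two finite invariant measures have the same limits up to their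
  total masses, hence are proportional on closed sets, and inner regularity then forces
  nu(X - N) = 0 once nu(N) > 0.  But no point of N charges D, so nu(D) <= nu(X - N).
*)

theory Submission
  imports Defs
begin

lemma lipschitz_on_borel_measurable:
  fixes f :: "'a::metric_space \<Rightarrow> 'b::metric_space"
  assumes "C-lipschitz_on UNIV f"
  shows "f \<in> borel_measurable borel"
  using assms borel_measurable_continuous_onI lipschitz_on_continuous_on by blast

lemma lipschitz_on_infdist: "1-lipschitz_on UNIV (\<lambda>x. infdist x S)"
proof (rule lipschitz_onI)
  fix x y :: 'a
  show "dist (infdist x S) (infdist y S) \<le> 1 * dist x y"
    using infdist_triangle[of x S y] infdist_triangle[of y S x]
    by (simp add: dist_real_def dist_commute abs_le_iff)
qed simp

lemma lipschitz_on_cutoff: "(real k)-lipschitz_on UNIV (\<lambda>x. max 0 (1 - real k * infdist x K))"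
proof (rule lipschitz_onI)
  fix x y :: 'a
  have "\<bar>infdist x K - infdist y K\<bar> \<le> dist x y"
    using lipschitz_onD[OF lipschitz_on_infdist, of x y] by (simp add: dist_real_def)
  then have "real k * \<bar>infdist x K - infdist y K\<bar> \<le> real k * dist x y"
    by (rule mult_left_mono) simp
  then have "\<bar>real k * infdist x K - real k * infdist y K\<bar> \<le> real k * dist x y"
    by (simp add: abs_mult flip: right_diff_distrib)
  then show "dist (max 0 (1 - real k * infdist x K)) (max 0 (1 - real k * infdist y K)) \<le> real k * dist x y"
    by (simp add: dist_real_def max_def abs_le_iff)
qed simp

lemma lipschitz_on_min_infdist: "1-lipschitz_on UNIV (\<lambda>x. min 1 (infdist x S))"
proof (rule lipschitz_onI)
  fix x y :: 'a
  show "dist (min 1 (infdist x S)) (min 1 (infdist y S)) \<le> 1 * dist x y"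
    using lipschitz_onD[OF lipschitz_on_infdist[of S], of x y]
    by (auto simp: dist_real_def min_def abs_le_iff)
qed simp

lemma obtain_lipschitz_with_zero_set:
  fixes u :: "'a::metric_space \<Rightarrow> real"
  assumes "continuous_on UNIV u"
  obtains g :: "'a \<Rightarrow> real"
  where "1-lipschitz_on UNIV g" "range g \<subseteq> {0..1}" "{y. g y = 0} = {y. u y = 0}"
proof (cases "\<exists>x. u x = 0")
  case True
  define Z where "Z = {y. u y = 0}"
  have "closed Z" "Z \<noteq> {}"
    using assms True by (auto simp: Z_def closed_Collect_eq)
  show ?thesis
  proof (rule that[of "\<lambda>y. min 1 (infdist y Z)"])
    have "min 1 (infdist y Z) = 0 \<longleftrightarrow> y \<in> Z" for y
      using in_closed_iff_infdist_zero[OF \<open>closed Z\<close> \<open>Z \<noteq> {}\<close>, of y] by (simp add: min_def)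
    then show "{y. min 1 (infdist y Z) = 0} = {y. u y = 0}"
      by (auto simp: Z_def)
  qed (use lipschitz_on_min_infdist infdist_nonneg in \<open>auto simp: Z_def\<close>)
next
  case False
  then show ?thesis
    by (intro that[of "\<lambda>_. 1"]) (auto intro: lipschitz_onI)
qed

lemma abs_cutoff_le_1: "\<bar>max 0 (1 - real k * infdist x K)\<bar> \<le> 1"
  using infdist_nonneg[of x K] by (simp add: max_def abs_le_iff)

lemma cutoff_tendsto_indicator:
  assumes "closed K" and "K \<noteq> {}"
  shows "(\<lambda>k. max 0 (1 - real k * infdist x K)) \<longlonglongrightarrow> indicator K x"
proof (cases "x \<in> K")
  case False
  then have "0 < infdist x K"
    using in_closed_iff_infdist_zero[OF assms] infdist_nonneg[of x K] by simp
  then obtain N :: nat where "1 / infdist x K < real N"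
    using reals_Archimedean2 by blast
  have "max 0 (1 - real k * infdist x K) = indicator K x" if "N \<le> k" for k
  proof -
    have "1 < real N * infdist x K"
      using \<open>1 / infdist x K < real N\<close> \<open>0 < infdist x K\<close> by (simp add: field_simps)
    also have "\<dots> \<le> real k * infdist x K"
      using that \<open>0 < infdist x K\<close> by (simp add: mult_right_mono)
    finally show ?thesis
      using False by simp
  qed
  then show ?thesis
    by (intro tendsto_eventually) (auto simp: eventually_sequentially)
qed simp

lemma integral_cutoff_tendsto_measure:
  fixes \<mu> :: "'a::metric_space measure"
  assumes sets_\<mu>: "sets \<mu> = sets borel" and "finite_measure \<mu>" and "closed K" and "K \<noteq> {}"
  shows "(\<lambda>k. \<integral>x. max 0 (1 - real k * infdist x K) \<partial>\<mu>) \<longlonglongrightarrow> measure \<mu> K"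
proof -
  have "(\<lambda>k. \<integral>x. max 0 (1 - real k * infdist x K) \<partial>\<mu>) \<longlonglongrightarrow> (\<integral>x. indicator K x \<partial>\<mu>)"
  proof (rule integral_dominated_convergence[where w="\<lambda>_. 1"])
    show "(\<lambda>x. max 0 (1 - real k * infdist x K)) \<in> borel_measurable \<mu>" for k
      using lipschitz_on_borel_measurable[OF lipschitz_on_cutoff] by (simp add: measurable_cong_sets[OF sets_\<mu>])
    show "AE x in \<mu>. (\<lambda>k. max 0 (1 - real k * infdist x K)) \<longlonglongrightarrow> indicator K x"
      using \<open>closed K\<close> \<open>K \<noteq> {}\<close> by (intro AE_I2 cutoff_tendsto_indicator)
    show "AE x in \<mu>. norm (max 0 (1 - real k * infdist x K)) \<le> 1" for k
      using abs_cutoff_le_1 by (intro AE_I2) (simp only: real_norm_def)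
    show "(indicator K :: 'a \<Rightarrow> real) \<in> borel_measurable \<mu>"
      using \<open>closed K\<close> sets_\<mu> by (intro borel_measurable_indicator) simp
  qed (use \<open>finite_measure \<mu>\<close> in \<open>rule finite_measure.integrable_const\<close>)
  moreover have "(\<integral>x. indicator K x \<partial>\<mu>) = measure \<mu> K"
    using assms by simp
  ultimately show ?thesis
    by simp
qed

lemma (in prob_space) abs_integral_le_bound:
  fixes f :: "'a \<Rightarrow> real"
  assumes "f \<in> borel_measurable M" and "\<And>x. \<bar>f x\<bar> \<le> B"
  shows "\<bar>\<integral>x. f x \<partial>M\<bar> \<le> B"
proof -
  have "integrable M f"
    using assms by (intro integrable_const_bound[of _ B]) auto
  then have "(\<integral>x. \<bar>f x\<bar> \<partial>M) \<le> B"
    using assms by (intro integral_le_const) auto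
  then show ?thesis
    using integral_abs_bound[of M f] by linarith
qed

lemma nn_integral_pos_if_integral_pos:
  fixes g u :: "'a \<Rightarrow> real"
  assumes "0 < (\<integral>y. g y \<partial>M)" and "\<And>y. g y \<noteq> 0 \<Longrightarrow> 0 < u y" and "u \<in> borel_measurable M"
  shows "0 < (\<integral>\<^sup>+y. ennreal (u y) \<partial>M)"
proof (rule ccontr)
  assume "\<not> 0 < (\<integral>\<^sup>+y. ennreal (u y) \<partial>M)"
  then have "AE y in M. ennreal (u y) = 0"
    using nn_integral_0_iff_AE[of "\<lambda>y. ennreal (u y)" M] assms(3) by (simp add: zero_less_iff_neq_zero)
  then have "AE y in M. g y = 0"
    by eventually_elim (use assms(2) in \<open>force simp: ennreal_eq_0_iff\<close>)
  then show False
    using integral_eq_zero_AE[of g M] assms(1) by simp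
qed

lemma abs_integral_diff_le_coupling_cost:
  fixes f :: "'a::polish_space \<Rightarrow> real"
  assumes "prob_space \<mu>" and \<gamma>: "\<gamma> \<in> couplings \<mu> \<mu>'"
    and f_lip: "C-lipschitz_on UNIV f" and f_bounded: "\<And>x. \<bar>f x\<bar> \<le> B"
    and cost: "integrable \<gamma> (\<lambda>p. dist (fst p) (snd p))"
  shows "\<bar>(\<integral>x. f x \<partial>\<mu>) - (\<integral>x. f x \<partial>\<mu>')\<bar> \<le> C * (\<integral>p. dist (fst p) (snd p) \<partial>\<gamma>)"
proof -
  have sets_\<gamma>: "sets \<gamma> = sets (borel \<Otimes>\<^sub>M borel)" and \<mu>: "\<mu> = distr \<gamma> borel fst"
    and \<mu>': "\<mu>' = distr \<gamma> borel snd"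
    using \<gamma> by (auto simp: couplings_def)
  have [measurable]: "fst \<in> \<gamma> \<rightarrow>\<^sub>M borel" "snd \<in> \<gamma> \<rightarrow>\<^sub>M borel"
    by (simp_all add: measurable_cong_sets[OF sets_\<gamma> refl])
  have f_meas[measurable]: "f \<in> borel_measurable borel"
    using f_lip by (rule lipschitz_on_borel_measurable)
  have "emeasure \<gamma> (space \<gamma>) = emeasure \<mu> (space \<mu>)"
    unfolding \<mu> by (simp add: emeasure_distr)
  then have "finite_measure \<gamma>"
    using prob_space.emeasure_space_1[OF \<open>prob_space \<mu>\<close>] by (intro finite_measureI) simp
  then have "integrable \<gamma> (\<lambda>p. f (fst p))" "integrable \<gamma> (\<lambda>p. f (snd p))"
    using f_bounded by (auto intro!: finite_measure.integrable_const_bound[where B=B])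
  then have "(\<integral>x. f x \<partial>\<mu>) - (\<integral>x. f x \<partial>\<mu>') = (\<integral>p. f (fst p) - f (snd p) \<partial>\<gamma>)"
    unfolding \<mu> \<mu>' by (simp add: integral_distr)
  also have "\<bar>\<dots>\<bar> \<le> (\<integral>p. \<bar>f (fst p) - f (snd p)\<bar> \<partial>\<gamma>)"
    by (rule integral_abs_bound)
  also have "\<dots> \<le> (\<integral>p. C * dist (fst p) (snd p) \<partial>\<gamma>)"
    using \<open>integrable \<gamma> (\<lambda>p. f (fst p))\<close> \<open>integrable \<gamma> (\<lambda>p. f (snd p))\<close> cost
      lipschitz_onD[OF f_lip]
    by (intro integral_mono) (auto simp: dist_real_def)
  finally show ?thesis
    by simp
qed

lemma abs_integral_diff_le_W1:
  fixes f :: "'a::polish_space \<Rightarrow> real"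
  assumes "prob_space \<mu>" and f_lip: "C-lipschitz_on UNIV f" and f_bounded: "\<And>x. \<bar>f x\<bar> \<le> B"
    and "0 \<le> w" and W1_le: "W1 \<mu> \<mu>' \<le> ennreal w"
  shows "\<bar>(\<integral>x. f x \<partial>\<mu>) - (\<integral>x. f x \<partial>\<mu>')\<bar> \<le> C * w"
proof (rule field_le_epsilon)
  fix e :: real
  assume "0 < e"
  have "0 \<le> C"
    using f_lip by (rule lipschitz_on_nonneg)
  define \<delta> where "\<delta> = e / (C + 1)"
  have "0 < \<delta>" "C * \<delta> \<le> e"
    using \<open>0 < e\<close> \<open>0 \<le> C\<close> by (auto simp: \<delta>_def field_simps)
  have "W1 \<mu> \<mu>' < ennreal (w + \<delta>)"
    using W1_le \<open>0 \<le> w\<close> \<open>0 < \<delta>\<close> by (simp add: order.strict_trans1 ennreal_lessI)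
  then obtain \<gamma> where \<gamma>: "\<gamma> \<in> couplings \<mu> \<mu>'"
    and cost_less: "(\<integral>\<^sup>+p. ennreal (dist (fst p) (snd p)) \<partial>\<gamma>) < ennreal (w + \<delta>)"
    unfolding W1_def by (auto simp: INF_less_iff)
  have sets_\<gamma>: "sets \<gamma> = sets (borel \<Otimes>\<^sub>M borel)"
    using \<gamma> by (simp add: couplings_def)
  have "(\<lambda>p. dist (fst p) (snd p)) \<in> borel_measurable \<gamma>"
    by (simp add: measurable_cong_sets[OF sets_\<gamma> refl])
  then have cost: "integrable \<gamma> (\<lambda>p. dist (fst p) (snd p))"
    using cost_less by (intro integrableI_bounded) (auto intro: order.strict_trans)
  have "(\<integral>p. dist (fst p) (snd p) \<partial>\<gamma>) \<le> w + \<delta>"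
    using cost_less nn_integral_eq_integral[OF cost] by (simp add: ennreal_less_iff less_imp_le)
  then have "C * (\<integral>p. dist (fst p) (snd p) \<partial>\<gamma>) \<le> C * w + C * \<delta>"
    using \<open>0 \<le> C\<close> by (simp add: mult_left_mono flip: distrib_left)
  then show "\<bar>(\<integral>x. f x \<partial>\<mu>) - (\<integral>x. f x \<partial>\<mu>')\<bar> \<le> C * w + e"
    using abs_integral_diff_le_coupling_cost[OF \<open>prob_space \<mu>\<close> \<gamma> f_lip f_bounded cost]
      \<open>C * \<delta> \<le> e\<close> by linarith
qed

lemma ollivier_ricci_pos_imp_W1_contraction:
  fixes m :: "'a::polish_space \<Rightarrow> 'a measure"
  assumes "ollivier_ricci m > 0"
  obtains c where "0 \<le> c" "c < 1" "\<And>x y. x \<noteq> y \<Longrightarrow> W1 (m x) (m y) \<le> ennreal (c * dist x y)"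
proof -
  \<comment> \<open>Capping the curvature at 1 keeps the contraction factor \<open>1 - k\<close> nonnegative.\<close>
  obtain k :: real where "0 < k" "k \<le> 1" and k_le: "ereal k \<le> ollivier_ricci m"
  proof (cases "ollivier_ricci m")
    case (real r)
    then show ?thesis
      using assms by (intro that[of "min r 1"]) auto
  next
    case PInf
    then show ?thesis
      by (intro that[of 1]) auto
  qed (use assms in simp)
  have "W1 (m x) (m y) \<le> ennreal ((1 - k) * dist x y)" if "x \<noteq> y" for x y
  proof -
    have "0 < dist x y"
      using that by simp
    have "ereal k \<le> 1 - enn2ereal (W1 (m x) (m y)) / ereal (dist x y)"
      using k_le that unfolding ollivier_ricci_def by (auto elim!: order_trans intro: INF_lower2[of "(x, y)"])
    moreover obtain w where "0 \<le> w" "W1 (m x) (m y) = ennreal w \<or> W1 (m x) (m y) = \<top>"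
      by (metis ennreal_cases order_refl)
    ultimately have "W1 (m x) (m y) = ennreal w" "k \<le> 1 - w / dist x y"
      using \<open>0 < dist x y\<close> by (auto simp: one_ereal_def)
    then show ?thesis
      using \<open>0 < dist x y\<close> by (auto simp: field_simps intro!: ennreal_leI)
  qed
  then show ?thesis
    using \<open>0 < k\<close> \<open>k \<le> 1\<close> by (intro that[of "1 - k"]) auto
qed

lemma sets_invariant_measure: "invariant_measure m \<mu> \<Longrightarrow> sets \<mu> = sets borel"
  by (simp add: invariant_measure_def)

lemma invariant_measureD:
  "invariant_measure m \<mu> \<Longrightarrow> A \<in> sets borel \<Longrightarrow> emeasure \<mu> A = (\<integral>\<^sup>+x. emeasure (m x) A \<partial>\<mu>)"
  by (simp add: invariant_measure_def)

lemma heat_pt_pos: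
  assumes "0 < t" and "0 < (\<integral>\<^sup>+y. ennreal (u y) \<partial>m_iter m x n)"
  shows "0 < heat_pt m u t x"
proof -
  let ?a = "\<lambda>n. ennreal (t ^ n / fact n) * (\<integral>\<^sup>+y. ennreal (u y) \<partial>m_iter m x n)"
  have "0 < ?a n"
    using assms by (simp add: ennreal_zero_less_mult_iff)
  also have "\<dots> \<le> (\<Sum>n. ?a n)"
    using sum_le_suminf[of ?a "{n}"] by (auto intro: summableI)
  finally show ?thesis
    unfolding heat_pt_def by (simp add: ennreal_zero_less_mult_iff)
qed

locale metric_random_walk =
  fixes m :: "'a::polish_space \<Rightarrow> 'a measure"
  assumes random_walk: "metric_random_walk_space m"
begin

lemma prob_space_m: "prob_space (m x)"
  using random_walk by (simp add: metric_random_walk_space_def)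

lemma sets_m [measurable_cong]: "sets (m x) = sets borel"
  using random_walk by (simp add: metric_random_walk_space_def)

lemma space_m [simp]: "space (m x) = UNIV"
  using sets_eq_imp_space_eq[OF sets_m] by simp

lemma emeasure_m_UNIV [simp]: "emeasure (m x) UNIV = 1"
  using prob_space.emeasure_space_1[OF prob_space_m] by simp

lemma emeasure_m_measurable: "A \<in> sets borel \<Longrightarrow> (\<lambda>x. emeasure (m x) A) \<in> borel_measurable borel"
  using random_walk by (simp add: metric_random_walk_space_def)

lemma m_measurable [measurable]: "m \<in> borel \<rightarrow>\<^sub>M subprob_algebra borel"
  by (intro measurable_subprob_algebra)
     (auto simp: sets_m prob_space_m prob_space_imp_subprob_space emeasure_m_measurable)

lemma sets_m_iter [measurable_cong]: "sets (m_iter m x n) = sets borel"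
proof (induction n)
  case (Suc n)
  have "space (m_iter m x n) \<noteq> {}"
    using sets_eq_imp_space_eq[OF Suc] by simp
  then show ?case
    using Suc by (simp add: sets_m)
qed simp

lemma prob_space_m_iter: "prob_space (m_iter m x n)"
proof (induction n)
  case (Suc n)
  then show ?case
    by (auto intro!: prob_space.prob_space_bind[where S=borel]
             simp: prob_space_m measurable_cong_sets[OF sets_m_iter refl])
qed (simp add: prob_space_return)

lemma m_iter_measurable [measurable]: "(\<lambda>x. m_iter m x n) \<in> borel \<rightarrow>\<^sub>M subprob_algebra borel"
  by (induction n) (simp_all add: return_measurable measurable_bind2)

lemma m_iter_1: "m_iter m x 1 = m x"
  by (simp add: bind_return[OF m_measurable])

lemma m_iter_Suc_left: "m_iter m x (Suc n) = m x \<bind> (\<lambda>z. m_iter m z n)"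
proof (induction n)
  case 0
  show ?case
    using bind_return''[OF sets_m[of x]] by (simp add: m_iter_1[simplified])
next
  case (Suc n)
  have "(\<lambda>z. m_iter m z n) \<in> m x \<rightarrow>\<^sub>M subprob_algebra borel"
    by (simp add: measurable_cong_sets[OF sets_m refl])
  then show ?case
    using Suc by (simp add: bind_assoc[OF _ m_measurable])
qed

lemma integral_m_iter_Suc:
  fixes f :: "'a \<Rightarrow> real"
  assumes "f \<in> borel_measurable borel" and "\<And>x. \<bar>f x\<bar> \<le> B"
  shows "(\<integral>z. f z \<partial>m_iter m x (Suc n)) = (\<integral>y. (\<integral>z. f z \<partial>m y) \<partial>m_iter m x n)"
  using assms prob_space_m_iter prob_space_m
  by (auto intro!: integral_bind[where K=borel and B'=1] prob_space.finite_measure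
           simp: measurable_cong_sets[OF sets_m_iter refl])

lemma abs_integral_m_iter_le:
  fixes f :: "'a \<Rightarrow> real"
  assumes "f \<in> borel_measurable borel" and "\<And>x. \<bar>f x\<bar> \<le> B"
  shows "\<bar>\<integral>z. f z \<partial>m_iter m x n\<bar> \<le> B"
  using assms
  by (intro prob_space.abs_integral_le_bound[OF prob_space_m_iter])
     (simp_all add: measurable_cong_sets[OF sets_m_iter refl])

lemma bind_invariant:
  assumes "invariant_measure m \<mu>"
  shows "\<mu> \<bind> m = \<mu>"
proof -
  have sets_\<mu>: "sets \<mu> = sets borel"
    using assms by (rule sets_invariant_measure)
  then have "space \<mu> \<noteq> {}"
    using sets_eq_imp_space_eq[OF sets_\<mu>] by simp
  have m_meas: "m \<in> \<mu> \<rightarrow>\<^sub>M subprob_algebra borel"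
    by (simp add: measurable_cong_sets[OF sets_\<mu> refl])
  have sets_bind_\<mu>: "sets (\<mu> \<bind> m) = sets borel"
    using \<open>space \<mu> \<noteq> {}\<close> by (simp add: sets_m)
  show ?thesis
  proof (rule measure_eqI)
    fix A
    assume "A \<in> sets (\<mu> \<bind> m)"
    then show "emeasure (\<mu> \<bind> m) A = emeasure \<mu> A"
      using assms emeasure_bind[OF \<open>space \<mu> \<noteq> {}\<close> m_meas] by (simp add: sets_bind_\<mu> invariant_measure_def)
  qed (simp add: sets_bind_\<mu> sets_\<mu>)
qed

lemma bind_m_iter_invariant:
  assumes "invariant_measure m \<mu>"
  shows "\<mu> \<bind> (\<lambda>x. m_iter m x n) = \<mu>"
proof -
  have sets_\<mu>: "sets \<mu> = sets borel"
    using assms by (rule sets_invariant_measure)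
  show ?thesis
  proof (induction n)
    case 0
    from bind_return''[OF sets_\<mu>] show ?case
      by simp
  next
    case (Suc n)
    have "(\<lambda>x. m_iter m x n) \<in> \<mu> \<rightarrow>\<^sub>M subprob_algebra borel"
      by (simp add: measurable_cong_sets[OF sets_\<mu> refl])
    from bind_assoc[OF this m_measurable] show ?case
      using Suc bind_invariant[OF assms] by simp
  qed
qed

lemma integral_m_iter_invariant:
  fixes f :: "'a \<Rightarrow> real"
  assumes "invariant_measure m \<mu>" and "finite_measure \<mu>"
    and "f \<in> borel_measurable borel" and "\<And>x. \<bar>f x\<bar> \<le> B"
  shows "(\<integral>x. (\<integral>z. f z \<partial>m_iter m x n) \<partial>\<mu>) = (\<integral>z. f z \<partial>\<mu>)"
proof -
  have sets_\<mu>: "sets \<mu> = sets borel"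
    using assms(1) by (rule sets_invariant_measure)
  have "(\<lambda>x. m_iter m x n) \<in> \<mu> \<rightarrow>\<^sub>M subprob_algebra borel"
    by (simp add: measurable_cong_sets[OF sets_\<mu> refl])
  have "(\<integral>z. f z \<partial>(\<mu> \<bind> (\<lambda>x. m_iter m x n))) = (\<integral>x. (\<integral>z. f z \<partial>m_iter m x n) \<partial>\<mu>)"
  proof (rule integral_bind[where K=borel and B'=1])
    show "AE x in \<mu>. emeasure (m_iter m x n) (space (m_iter m x n)) \<le> ennreal 1"
      by (simp add: prob_space.emeasure_space_1[OF prob_space_m_iter])
  qed (use assms(2-4) \<open>(\<lambda>x. m_iter m x n) \<in> \<mu> \<rightarrow>\<^sub>M subprob_algebra borel\<close> in auto)
  then show ?thesis
    by (simp add: bind_m_iter_invariant[OF assms(1)])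
qed

lemma N_set_borel:
  assumes "D \<in> sets borel"
  shows "N_set m D \<in> sets borel"
proof -
  have [measurable]: "(\<lambda>x. emeasure (m_iter m x n) D) \<in> borel_measurable borel" for n
    using measurable_emeasure_subprob_algebra[OF assms] by measurable
  have "N_set m D = {x \<in> space borel. \<forall>n. 1 \<le> n \<longrightarrow> emeasure (m_iter m x n) D = 0}"
    by (simp add: N_set_def)
  also have "\<dots> \<in> sets borel"
    by measurable
  finally show ?thesis .
qed

lemma AE_m_N_set:
  assumes D: "D \<in> sets borel" and "x \<in> N_set m D"
  shows "AE z in m x. z \<in> N_set m D"
proof -
  have "AE z in m x. emeasure (m_iter m z n) D = 0" if "1 \<le> n" for n
  proof -
    have "(\<lambda>z. m_iter m z n) \<in> m x \<rightarrow>\<^sub>M subprob_algebra borel"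
      by (simp add: measurable_cong_sets[OF sets_m refl])
    then have "(\<integral>\<^sup>+z. emeasure (m_iter m z n) D \<partial>m x) = emeasure (m_iter m x (Suc n)) D"
      by (simp add: m_iter_Suc_left emeasure_bind[OF _ _ D] del: m_iter.simps)
    also have "\<dots> = 0"
      using \<open>x \<in> N_set m D\<close> by (simp add: N_set_def del: m_iter.simps)
    finally show ?thesis
      using measurable_emeasure_subprob_algebra[OF D]
      by (subst nn_integral_0_iff_AE[symmetric]) (simp_all add: measurable_cong_sets[OF sets_m refl])
  qed
  then show ?thesis
    by (simp add: N_set_def AE_all_countable)
qed

lemma emeasure_Int_absorbing_split:
  assumes inv: "invariant_measure m \<nu>" and N: "N \<in> sets borel"
    and absorbing: "\<And>x. x \<in> N \<Longrightarrow> AE z in m x. z \<in> N" and A: "A \<in> sets borel"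
  shows "emeasure \<nu> (N \<inter> A) = (\<integral>\<^sup>+x. indicator N x * emeasure (m x) A \<partial>\<nu>)
      + (\<integral>\<^sup>+x. indicator (- N) x * emeasure (m x) (N \<inter> A) \<partial>\<nu>)"
proof -
  have sets_\<nu>: "sets \<nu> = sets borel"
    using inv by (rule sets_invariant_measure)
  have "emeasure (m x) (N \<inter> A) = emeasure (m x) A" if "x \<in> N" for x
    using absorbing[OF that] A N by (intro emeasure_eq_AE) (auto simp: sets_m)
  then have pointwise: "emeasure (m x) (N \<inter> A) = indicator N x * emeasure (m x) A
      + indicator (- N) x * emeasure (m x) (N \<inter> A)" for x
    by (simp split: split_indicator)
  have "- N \<in> sets borel"
    using N by (simp add: Compl_eq_Diff_UNIV sets.Diff)
  have "emeasure \<nu> (N \<inter> A) = (\<integral>\<^sup>+x. emeasure (m x) (N \<inter> A) \<partial>\<nu>)"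
    using inv A N by (simp add: invariant_measureD)
  also have "\<dots> = (\<integral>\<^sup>+x. indicator N x * emeasure (m x) A
      + indicator (- N) x * emeasure (m x) (N \<inter> A) \<partial>\<nu>)"
    by (rule nn_integral_cong) (rule pointwise)
  also have "\<dots> = (\<integral>\<^sup>+x. indicator N x * emeasure (m x) A \<partial>\<nu>)
      + (\<integral>\<^sup>+x. indicator (- N) x * emeasure (m x) (N \<inter> A) \<partial>\<nu>)"
    using A N \<open>- N \<in> sets borel\<close> emeasure_m_measurable[OF A] emeasure_m_measurable[of "N \<inter> A"]
    by (intro nn_integral_add) (simp_all add: measurable_cong_sets[OF sets_\<nu> refl])
  finally show ?thesis .
qed

lemma emeasure_Int_absorbing:
  assumes inv: "invariant_measure m \<nu>" and fin: "finite_measure \<nu>"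
    and N: "N \<in> sets borel" and absorbing: "\<And>x. x \<in> N \<Longrightarrow> AE z in m x. z \<in> N"
    and A: "A \<in> sets borel"
  shows "emeasure \<nu> (N \<inter> A) = (\<integral>\<^sup>+x. indicator N x * emeasure (m x) A \<partial>\<nu>)"
proof -
  have split: "emeasure \<nu> (N \<inter> B) = (\<integral>\<^sup>+x. indicator N x * emeasure (m x) B \<partial>\<nu>)
      + (\<integral>\<^sup>+x. indicator (- N) x * emeasure (m x) (N \<inter> B) \<partial>\<nu>)" if "B \<in> sets borel" for B
    using inv N absorbing that by (rule emeasure_Int_absorbing_split)
  have "(\<integral>\<^sup>+x. indicator N x * emeasure (m x) UNIV \<partial>\<nu>) = emeasure \<nu> N"
    using N sets_invariant_measure[OF inv] by simp
  then have "emeasure \<nu> N + (\<integral>\<^sup>+x. indicator (- N) x * emeasure (m x) N \<partial>\<nu>) = emeasure \<nu> N + 0"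
    using split[of UNIV] by simp
  then have leak: "(\<integral>\<^sup>+x. indicator (- N) x * emeasure (m x) N \<partial>\<nu>) = 0"
    using finite_measure.emeasure_finite[OF fin, of N] by (auto simp: ennreal_add_left_cancel)
  have "(\<integral>\<^sup>+x. indicator (- N) x * emeasure (m x) (N \<inter> A) \<partial>\<nu>)
      \<le> (\<integral>\<^sup>+x. indicator (- N) x * emeasure (m x) N \<partial>\<nu>)"
    using N by (intro nn_integral_mono mult_left_mono emeasure_mono) (auto simp: sets_m)
  then show ?thesis
    using split[OF A] leak by simp
qed

lemma invariant_measure_restrict_absorbing:
  assumes inv: "invariant_measure m \<nu>" and fin: "finite_measure \<nu>"
    and N: "N \<in> sets borel" and absorbing: "\<And>x. x \<in> N \<Longrightarrow> AE z in m x. z \<in> N"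
  shows "invariant_measure m (density \<nu> (indicator N))"
proof -
  have sets_\<nu>: "sets \<nu> = sets borel"
    using inv by (rule sets_invariant_measure)
  have "(\<integral>\<^sup>+x. emeasure (m x) A \<partial>density \<nu> (indicator N)) = emeasure \<nu> (N \<inter> A)"
    if "A \<in> sets borel" for A
    using N emeasure_m_measurable[OF that] emeasure_Int_absorbing[OF inv fin N absorbing that]
    by (subst nn_integral_density) (simp_all add: measurable_cong_sets[OF sets_\<nu> refl])
  then show ?thesis
    using N by (simp add: invariant_measure_def sets_\<nu> emeasure_restricted)
qed

end

locale contractive_random_walk = metric_random_walk m for m :: "'a::polish_space \<Rightarrow> 'a measure" +
  fixes c :: real
  assumes contraction_nonneg: "0 \<le> c" and contraction_less_1: "c < 1"
    and W1_contraction: "\<And>x y. x \<noteq> y \<Longrightarrow> W1 (m x) (m y) \<le> ennreal (c * dist x y)"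
begin

lemma lipschitz_on_integral_m:
  fixes f :: "'a \<Rightarrow> real"
  assumes f_lip: "C-lipschitz_on UNIV f" and f_bounded: "\<And>x. \<bar>f x\<bar> \<le> B"
  shows "(c * C)-lipschitz_on UNIV (\<lambda>x. \<integral>z. f z \<partial>m x)"
proof (rule lipschitz_onI)
  fix x y :: 'a
  show "dist (\<integral>z. f z \<partial>m x) (\<integral>z. f z \<partial>m y) \<le> c * C * dist x y"
  proof (cases "x = y")
    case False
    have "\<bar>(\<integral>z. f z \<partial>m x) - (\<integral>z. f z \<partial>m y)\<bar> \<le> C * (c * dist x y)"
      using contraction_nonneg
      by (intro abs_integral_diff_le_W1[OF prob_space_m f_lip f_bounded _ W1_contraction[OF False]]) simp
    then show ?thesis
      by (simp add: dist_real_def mult_ac)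
  qed simp
qed (use contraction_nonneg lipschitz_on_nonneg[OF f_lip] in simp)

lemma lipschitz_on_integral_m_iter:
  fixes f :: "'a \<Rightarrow> real"
  assumes "C-lipschitz_on UNIV f" and "\<And>x. \<bar>f x\<bar> \<le> B"
  shows "(c ^ n * C)-lipschitz_on UNIV (\<lambda>x. \<integral>z. f z \<partial>m_iter m x n)"
  using assms
proof (induction n arbitrary: f C)
  case 0
  then show ?case
    by (simp add: integral_return lipschitz_on_borel_measurable)
next
  case (Suc n)
  have f_meas: "f \<in> borel_measurable borel"
    using Suc.prems(1) by (rule lipschitz_on_borel_measurable)
  have "\<bar>\<integral>z. f z \<partial>m y\<bar> \<le> B" for y
    using f_meas Suc.prems(2)
    by (intro prob_space.abs_integral_le_bound[OF prob_space_m]) (simp_all add: measurable_cong_sets[OF sets_m refl])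
  with Suc.IH[OF lipschitz_on_integral_m[OF Suc.prems]]
  have "(c ^ n * (c * C))-lipschitz_on UNIV (\<lambda>x. \<integral>y. (\<integral>z. f z \<partial>m y) \<partial>m_iter m x n)" .
  then show ?case
    unfolding integral_m_iter_Suc[OF f_meas Suc.prems(2)] by (simp add: mult_ac)
qed

lemma tendsto_integral_diff_m_iter:
  fixes f :: "'a \<Rightarrow> real"
  assumes fin: "finite_measure \<mu>" and sets_\<mu>: "sets \<mu> = sets borel"
    and f_lip: "C-lipschitz_on UNIV f" and f_bounded: "\<And>x. \<bar>f x\<bar> \<le> B"
  shows "(\<lambda>n. \<integral>y. (\<integral>z. f z \<partial>m_iter m x n) - (\<integral>z. f z \<partial>m_iter m y n) \<partial>\<mu>) \<longlonglongrightarrow> 0"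
proof -
  define Q where "Q n y = (\<integral>z. f z \<partial>m_iter m y n)" for n y
  have Q_lip: "(c ^ n * C)-lipschitz_on UNIV (Q n)" for n
    unfolding Q_def using f_lip f_bounded by (rule lipschitz_on_integral_m_iter)
  have Q_bounded: "\<bar>Q n y\<bar> \<le> B" for n y
    unfolding Q_def using lipschitz_on_borel_measurable[OF f_lip] f_bounded by (rule abs_integral_m_iter_le)
  have "(\<lambda>n. \<integral>y. Q n x - Q n y \<partial>\<mu>) \<longlonglongrightarrow> (\<integral>y. 0 \<partial>\<mu>)"
  proof (rule integral_dominated_convergence[where w="\<lambda>_. 2 * B"])
    show "AE y in \<mu>. norm (Q n x - Q n y) \<le> 2 * B" for n
      using Q_bounded[of n x] Q_bounded[of n] by (intro AE_I2) (smt (verit) real_norm_def)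
    show "AE y in \<mu>. (\<lambda>n. Q n x - Q n y) \<longlonglongrightarrow> 0"
    proof (rule AE_I2)
      fix y
      have "\<forall>n. norm (Q n x - Q n y) \<le> c ^ n * (C * dist x y)"
        using lipschitz_onD[OF Q_lip, of x y] by (simp add: dist_real_def mult.assoc)
      moreover have "(\<lambda>n. c ^ n * (C * dist x y)) \<longlonglongrightarrow> 0"
        using contraction_nonneg contraction_less_1 by (intro tendsto_mult_left_zero LIMSEQ_power_zero) simp
      ultimately show "(\<lambda>n. Q n x - Q n y) \<longlonglongrightarrow> 0"
        by (rule Lim_null_comparison[OF always_eventually])
    qed
    show "(\<lambda>y. Q n x - Q n y) \<in> borel_measurable \<mu>" for n
      using lipschitz_on_borel_measurable[OF Q_lip] by (simp add: measurable_cong_sets[OF sets_\<mu> refl])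
  qed (simp_all add: finite_measure.integrable_const[OF fin])
  then show ?thesis
    by (simp add: Q_def)
qed

lemma tendsto_integral_m_iter:
  fixes f :: "'a \<Rightarrow> real"
  assumes inv: "invariant_measure m \<mu>" and fin: "finite_measure \<mu>"
    and f_lip: "C-lipschitz_on UNIV f" and f_bounded: "\<And>x. \<bar>f x\<bar> \<le> B"
  shows "(\<lambda>n. measure \<mu> UNIV * (\<integral>z. f z \<partial>m_iter m x n)) \<longlonglongrightarrow> (\<integral>z. f z \<partial>\<mu>)"
proof -
  have sets_\<mu>: "sets \<mu> = sets borel"
    using inv by (rule sets_invariant_measure)
  have f_meas: "f \<in> borel_measurable borel"
    using f_lip by (rule lipschitz_on_borel_measurable)
  have "integrable \<mu> (\<lambda>y. \<integral>z. f z \<partial>m_iter m y n)" for n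
    using lipschitz_on_borel_measurable[OF lipschitz_on_integral_m_iter[OF f_lip f_bounded]]
      abs_integral_m_iter_le[OF f_meas f_bounded]
    by (intro finite_measure.integrable_const_bound[OF fin, of _ B])
       (simp_all add: measurable_cong_sets[OF sets_\<mu> refl])
  then have "(\<integral>y. (\<integral>z. f z \<partial>m_iter m x n) - (\<integral>z. f z \<partial>m_iter m y n) \<partial>\<mu>)
      = measure \<mu> UNIV * (\<integral>z. f z \<partial>m_iter m x n) - (\<integral>z. f z \<partial>\<mu>)" for n
    using finite_measure.integrable_const[OF fin] integral_m_iter_invariant[OF inv fin f_meas f_bounded]
      sets_eq_imp_space_eq[OF sets_\<mu>]
    by (subst Bochner_Integration.integral_diff) (simp_all add: mult.commute)
  with tendsto_integral_diff_m_iter[OF fin sets_\<mu> f_lip f_bounded, of x] show ?thesis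
    by (simp add: LIM_zero_iff)
qed

lemma eventually_integral_m_iter_pos:
  fixes g :: "'a \<Rightarrow> real"
  assumes inv: "invariant_measure m \<nu>" and fin: "finite_measure \<nu>"
    and g_lip: "C-lipschitz_on UNIV g" and g_bounded: "\<And>x. \<bar>g x\<bar> \<le> B"
    and "0 < (\<integral>y. g y \<partial>\<nu>)"
  shows "\<forall>\<^sub>F n in sequentially. 0 < (\<integral>y. g y \<partial>m_iter m x n)"
proof -
  have "\<forall>\<^sub>F n in sequentially. 0 < measure \<nu> UNIV * (\<integral>y. g y \<partial>m_iter m x n)"
    using \<open>0 < (\<integral>y. g y \<partial>\<nu>)\<close> by (rule order_tendstoD[OF tendsto_integral_m_iter[OF inv fin g_lip g_bounded]])
  then show ?thesis
    by eventually_elim (simp add: zero_less_mult_iff)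
qed

lemma invariant_measures_proportional_on_closed:
  assumes inv: "invariant_measure m \<mu>" and fin: "finite_measure \<mu>"
    and inv': "invariant_measure m \<mu>'" and fin': "finite_measure \<mu>'"
    and "closed K"
  shows "measure \<mu>' UNIV * measure \<mu> K = measure \<mu> UNIV * measure \<mu>' K"
proof (cases "K = {}")
  case False
  fix x :: 'a
  define f where "f k z = max 0 (1 - real k * infdist z K)" for k z
  have f_lip: "(real k)-lipschitz_on UNIV (f k)" and f_bounded: "\<bar>f k z\<bar> \<le> 1" for k z
    unfolding f_def by (rule lipschitz_on_cutoff abs_cutoff_le_1)+
  have "measure \<mu>' UNIV * (\<integral>z. f k z \<partial>\<mu>) = measure \<mu> UNIV * (\<integral>z. f k z \<partial>\<mu>')" for k
  proof -
    let ?Q = "\<lambda>n. \<integral>z. f k z \<partial>m_iter m x n"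
    have "(\<lambda>n. measure \<mu>' UNIV * (measure \<mu> UNIV * ?Q n)) \<longlonglongrightarrow> measure \<mu>' UNIV * (\<integral>z. f k z \<partial>\<mu>)"
      by (intro tendsto_mult_left tendsto_integral_m_iter[OF inv fin f_lip f_bounded])
    moreover have "(\<lambda>n. measure \<mu> UNIV * (measure \<mu>' UNIV * ?Q n)) \<longlonglongrightarrow> measure \<mu> UNIV * (\<integral>z. f k z \<partial>\<mu>')"
      by (intro tendsto_mult_left tendsto_integral_m_iter[OF inv' fin' f_lip f_bounded])
    ultimately show ?thesis
      by (simp add: LIMSEQ_unique mult.left_commute)
  qed
  moreover have "(\<lambda>k. measure \<mu>' UNIV * (\<integral>z. f k z \<partial>\<mu>)) \<longlonglongrightarrow> measure \<mu>' UNIV * measure \<mu> K"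
    and "(\<lambda>k. measure \<mu> UNIV * (\<integral>z. f k z \<partial>\<mu>')) \<longlonglongrightarrow> measure \<mu> UNIV * measure \<mu>' K"
    using inv inv' fin fin' \<open>closed K\<close> False unfolding f_def invariant_measure_def
    by (auto intro!: tendsto_mult_left integral_cutoff_tendsto_measure)
  ultimately show ?thesis
    using LIMSEQ_unique by simp
qed simp

lemma weakly_strong_m_connected:
  assumes inv: "invariant_measure m \<nu>" and fin: "finite_measure \<nu>"
  shows "weakly_strong_m_connected m \<nu>"
  unfolding weakly_strong_m_connected_def
proof (intro allI impI)
  fix u :: "'a \<Rightarrow> real" and x :: 'a and t :: real
  assume "continuous_on UNIV u \<and> (\<forall>x. 0 \<le> u x) \<and> integrable \<nu> (\<lambda>x. (u x)\<^sup>2) \<and> \<not> (AE x in \<nu>. u x = 0)"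
  then have u_cont: "continuous_on UNIV u" and u_nonneg: "\<And>y. 0 \<le> u y"
    and u_not_0: "\<not> (AE y in \<nu>. u y = 0)"
    by auto
  assume "0 < t"
  obtain g :: "'a \<Rightarrow> real" where g_lip: "1-lipschitz_on UNIV g" and "range g \<subseteq> {0..1}"
    and "{y. g y = 0} = {y. u y = 0}"
    using u_cont by (rule obtain_lipschitz_with_zero_set)
  then have g_range: "0 \<le> g y \<and> g y \<le> 1" and g_eq_0_iff: "g y = 0 \<longleftrightarrow> u y = 0" for y
    by (auto simp: image_subset_iff set_eq_iff)
  have g_bounded: "\<bar>g y\<bar> \<le> 1" for y
    using g_range[of y] by simp
  have sets_\<nu>: "sets \<nu> = sets borel"
    using inv by (rule sets_invariant_measure)
  have "g \<in> borel_measurable \<nu>"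
    using lipschitz_on_borel_measurable[OF g_lip] by (simp add: measurable_cong_sets[OF sets_\<nu> refl])
  then have "integrable \<nu> g"
    using g_bounded by (intro finite_measure.integrable_const_bound[OF fin, of _ 1]) auto
  then have "(\<integral>y. g y \<partial>\<nu>) \<noteq> 0"
    using integral_nonneg_eq_0_iff_AE[of \<nu> g] u_not_0 g_range by (simp add: g_eq_0_iff)
  then have "0 < (\<integral>y. g y \<partial>\<nu>)"
    using g_range by (simp add: order_less_le)
  then have "\<forall>\<^sub>F n in sequentially. 0 < (\<integral>y. g y \<partial>m_iter m x n)"
    using inv fin g_lip g_bounded by (intro eventually_integral_m_iter_pos)
  then obtain n where "0 < (\<integral>y. g y \<partial>m_iter m x n)"
    by (auto dest: eventually_happens)
  moreover have "0 < u y" if "g y \<noteq> 0" for y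
    using that g_eq_0_iff[of y] u_nonneg[of y] by simp
  moreover have "u \<in> borel_measurable (m_iter m x n)"
    using borel_measurable_continuous_onI[OF u_cont] by (simp add: measurable_cong_sets[OF sets_m_iter refl])
  ultimately have "0 < (\<integral>\<^sup>+y. ennreal (u y) \<partial>m_iter m x n)"
    by (rule nn_integral_pos_if_integral_pos)
  with \<open>0 < t\<close> show "0 < heat_pt m u t x"
    by (rule heat_pt_pos)
qed

lemma absorbing_conull_or_null:
  assumes inv: "invariant_measure m \<nu>" and fin: "finite_measure \<nu>"
    and N: "N \<in> sets borel" and absorbing: "\<And>x. x \<in> N \<Longrightarrow> AE z in m x. z \<in> N"
  shows "emeasure \<nu> (- N) = 0 \<or> emeasure \<nu> N = 0"
proof (rule disjCI)
  assume "emeasure \<nu> N \<noteq> 0"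
  define \<mu> where "\<mu> = density \<nu> (indicator N)"
  have sets_\<nu>: "sets \<nu> = sets borel"
    using inv by (rule sets_invariant_measure)
  have \<mu>_eq: "emeasure \<mu> A = emeasure \<nu> (N \<inter> A)" if "A \<in> sets borel" for A
    unfolding \<mu>_def using that N by (simp add: emeasure_restricted sets_\<nu>)
  have "emeasure \<nu> N = (SUP K \<in> {K. K \<subseteq> N \<and> compact K}. emeasure \<nu> K)"
    using inner_regular[OF sets_\<nu> _ N] finite_measure.emeasure_finite[OF fin] by simp
  moreover have "0 < emeasure \<nu> N"
    using \<open>emeasure \<nu> N \<noteq> 0\<close> by (simp add: zero_less_iff_neq_zero)
  ultimately obtain K where "K \<subseteq> N" "compact K" "0 < emeasure \<nu> K"
    by (auto simp: less_SUP_iff)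
  have "finite_measure \<mu>"
    using \<mu>_eq[of UNIV] finite_measure.emeasure_finite[OF fin]
    by (intro finite_measureI) (simp add: \<mu>_def sets_eq_imp_space_eq[OF sets_\<nu>])
  moreover have "invariant_measure m \<mu>"
    unfolding \<mu>_def using inv fin N absorbing by (rule invariant_measure_restrict_absorbing)
  ultimately have "measure \<nu> UNIV * measure \<mu> K = measure \<mu> UNIV * measure \<nu> K"
    using inv fin \<open>compact K\<close> by (intro invariant_measures_proportional_on_closed compact_imp_closed)
  moreover have "measure \<mu> K = measure \<nu> K" "measure \<mu> UNIV = measure \<nu> N"
    using \<mu>_eq[of K] \<mu>_eq[of UNIV] \<open>K \<subseteq> N\<close> \<open>compact K\<close>
    by (simp_all add: measure_def Int_absorb1 compact_imp_closed)
  moreover have "0 < measure \<nu> K"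
    using \<open>0 < emeasure \<nu> K\<close> by (simp add: finite_measure.emeasure_eq_measure[OF fin])
  ultimately have "measure \<nu> UNIV = measure \<nu> N"
    by simp
  then have "measure \<nu> (- N) = 0"
    using finite_measure.finite_measure_compl[OF fin, of N] N
    by (simp add: sets_\<nu> sets_eq_imp_space_eq[OF sets_\<nu>] Compl_eq_Diff_UNIV)
  then show "emeasure \<nu> (- N) = 0"
    by (simp add: finite_measure.emeasure_eq_measure[OF fin])
qed

lemma m_connected:
  assumes inv: "invariant_measure m \<nu>" and fin: "finite_measure \<nu>"
  shows "m_connected m \<nu>"
  unfolding m_connected_def
proof (intro ballI impI)
  fix D :: "'a set"
  assume D: "D \<in> sets borel" and "0 < emeasure \<nu> D \<and> emeasure \<nu> D < \<infinity>"
  define N where "N = N_set m D"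
  have N: "N \<in> sets borel" and absorbing: "\<And>x. x \<in> N \<Longrightarrow> AE z in m x. z \<in> N"
    unfolding N_def using D by (rule N_set_borel AE_m_N_set)+
  have m_D: "emeasure (m x) D = 0" if "x \<in> N" for x
  proof -
    have "emeasure (m_iter m x 1) D = 0"
      using that unfolding N_def N_set_def by blast
    then show ?thesis
      by (simp only: m_iter_1)
  qed
  have "emeasure \<nu> (N \<inter> D) = (\<integral>\<^sup>+x. indicator N x * emeasure (m x) D \<partial>\<nu>)"
    using inv fin N absorbing D by (rule emeasure_Int_absorbing)
  also have "\<dots> = 0"
    using m_D by (intro nn_integral_zero' AE_I2) (simp split: split_indicator)
  finally have "emeasure \<nu> (N \<inter> D) = 0" .
  have "- N \<in> sets \<nu>" "N \<inter> D \<in> sets \<nu>"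
    using N D sets_invariant_measure[OF inv] by (auto simp: Compl_eq_Diff_UNIV)
  then have "emeasure \<nu> D \<le> emeasure \<nu> (N \<inter> D \<union> - N)"
    by (intro emeasure_mono) auto
  also have "\<dots> \<le> emeasure \<nu> (N \<inter> D) + emeasure \<nu> (- N)"
    using \<open>- N \<in> sets \<nu>\<close> \<open>N \<inter> D \<in> sets \<nu>\<close> by (rule emeasure_subadditive[rotated])
  finally have "emeasure \<nu> (- N) \<noteq> 0"
    using \<open>emeasure \<nu> (N \<inter> D) = 0\<close> \<open>0 < emeasure \<nu> D \<and> emeasure \<nu> D < \<infinity>\<close> by auto
  then show "emeasure \<nu> (N_set m D) = 0"
    using absorbing_conull_or_null[OF inv fin N absorbing] by (simp add: N_def)
qed

end

theorem theorem2p12: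
  fixes m :: "'a::polish_space \<Rightarrow> 'a measure" and \<nu> :: "'a measure"
  assumes "metric_random_walk_space m"
    and "invariant_measure m \<nu>"
    and "emeasure \<nu> (space \<nu>) < \<infinity>"
    and "ollivier_ricci m > 0"
  shows "m_connected m \<nu> \<and> weakly_strong_m_connected m \<nu>"
proof -
  obtain c where "0 \<le> c" "c < 1" "\<And>x y. x \<noteq> y \<Longrightarrow> W1 (m x) (m y) \<le> ennreal (c * dist x y)"
    using ollivier_ricci_pos_imp_W1_contraction[OF assms(4)] by blast
  then interpret contractive_random_walk m c
    using assms(1) by unfold_locales
  have "finite_measure \<nu>"
    using assms(3) by (intro finite_measureI) simp
  then show ?thesis
    using m_connected weakly_strong_m_connected assms(2) by blast
qed

end
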